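(* Let $\mathcal{W}=(A,\to,\mathbb{S},\mathsf{f}_{\mathtt{NF}},\mathsf{Aggr})$ be a wARS. Then (i) $\mathcal{W}$ is not bounded if $\mathsf{f}_{\mathtt{NF}}(a)=\top$ for some $a\in\mathtt{NF}_\to$; and (ii) $\mathcal{W}$ is bounded if $\mathsf{f}_{\mathtt{NF}}$ is universally bounded and all aggregator functions $\mathsf{Aggr}_{a\to B}$ are selective.
   Context: A semiring $\mathbb{S}=(S,\oplus,\odot,\mathbf{0},\mathbf{1})$: $(S,\oplus,\mathbf{0})$ commutative monoid, $(S,\odot,\mathbf{1})$ monoid, $\odot$ distributes over $\oplus$, $\mathbf{0}$ annihilator. Natural order: $s\preccurlyeq t$ iff $s\oplus u=t$ for some $u$. A complete lattice semiring is one where $\preccurlyeq$ is antisymmetric and every subset $T\subseteq S$ has a least upper bound $\bigsqcup T$; $\top=\bigsqcup S$. Infinite sums/products of a sequence $[s_1,s_2,\dots]$ are the suprema of the finite partial sums/products. $\mathrm{Seq}(X)$: non-empty finite or infinite sequences over $X$. An sARS is $(A,\to)$ with $\to\subseteq A\times\mathrm{Seq}(A)$; $\mathtt{NF}_\to$ is the set of $a$ with no $B$ such that $a\to B$. An $(A,\to)$-reduction tree (RT) is a labeled ordered tree whose nodes $v$ carry labels $a_v\in A$ and whose ordered child sequence $vE$ is either empty or satisfies $a_v\to[a_w\mid w\in vE]$. Aggregators: smallest set containing constants $s\in S$, variables $v_1,v_2,\dots$, and $\bigoplus F$, $\bigodot F$ for non-empty finite or infinite sequences $F$ of aggregators; they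 induce functions $S^n\to S$ by substitution $v_i\mapsto$ $i$-th argument. A wARS $(A,\to,\mathbb{S},\mathsf{f}_{\mathtt{NF}},\mathsf{Aggr})$ consists of an sARS $(A,\to)$, a complete lattice semiring $\mathbb{S}$, a map $\mathsf{f}_{\mathtt{NF}}:\mathtt{NF}_\to\to S$, and for each $a\to B$ an aggregator $\mathsf{Aggr}_{a\to B}$ with variable indices $\le|B|$, viewed as a function $S^{|B|}\to S$. Weight of a finite-depth RT $\mathfrak{T}$ at node $v$: $\mathsf{f}_{\mathtt{NF}}(a_v)$ if $a_v\in\mathtt{NF}_\to$; $\mathbf{0}$ if $v$ is a leaf with $a_v\notin\mathtt{NF}_\to$; $\mathsf{Aggr}_{a_v\to B}[$weights of the children in order$]$ with $B=[a_w\mid w\in vE]$ otherwise; $[\![\mathfrak{T}]\!]$ is the weight at the root. $[\![a]\!]=\bigsqcup\{[\![\mathfrak{T}]\!]\mid\mathfrak{T}$ an RT of finite depth with root labeled $a\}$. The wARS is bounded if $[\![a]\!]\neq\top$ for all $a\in A$. $\mathsf{f}_{\mathtt{NF}}$ is universally bounded if there is $C\in S\setminus\{\top\}$ with $\mathsf{f}_{\mathtt{NF}}(a)\preccurlyeq C$ for all $a\in\mathtt{NF}_\to$. An aggregator function $\mathsf{Aggr}_{a\to B}:S^{|B|}\to S$ is selective if for every argument $[s_1,s_2,\dots]\in S^{|B|}$ there is $1\le i\le|B|$ with $\mathsf{Aggr}_{a\to B}[s_1,s_2,\dots]=s_i$. *)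

theory Defs
  imports Main "HOL-Library.Extended_Nat"
begin

record 's semiring =
  splus  :: "'s \<Rightarrow> 's \<Rightarrow> 's"
  stimes :: "'s \<Rightarrow> 's \<Rightarrow> 's"
  szero  :: 's
  sone   :: 's

definition is_semiring :: "'s semiring \<Rightarrow> bool" where
  "is_semiring S \<longleftrightarrow>
     (\<forall>x y z. splus S (splus S x y) z = splus S x (splus S y z)) \<and>
     (\<forall>x y. splus S x y = splus S y x) \<and>
     (\<forall>x. splus S (szero S) x = x) \<and>
     (\<forall>x y z. stimes S (stimes S x y) z = stimes S x (stimes S y z)) \<and>
     (\<forall>x. stimes S (sone S) x = x \<and> stimes S x (sone S) = x) \<and>
     (\<forall>x y z. stimes S x (splus S y z) = splus S (stimes S x y) (stimes S x z)) \<and>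
     (\<forall>x y z. stimes S (splus S y z) x = splus S (stimes S y x) (stimes S z x)) \<and>
     (\<forall>x. stimes S (szero S) x = szero S \<and> stimes S x (szero S) = szero S)"

definition nat_le :: "'s semiring \<Rightarrow> 's \<Rightarrow> 's \<Rightarrow> bool" where
  "nat_le S s t \<longleftrightarrow> (\<exists>u. splus S s u = t)"

definition is_lub :: "'s semiring \<Rightarrow> 's set \<Rightarrow> 's \<Rightarrow> bool" where
  "is_lub S T x \<longleftrightarrow> (\<forall>t\<in>T. nat_le S t x) \<and> (\<forall>y. (\<forall>t\<in>T. nat_le S t y) \<longrightarrow> nat_le S x y)"

definition Lub :: "'s semiring \<Rightarrow> 's set \<Rightarrow> 's" where
  "Lub S T = (THE x. is_lub S T x)"

definition complete_lattice_semiring :: "'s semiring \<Rightarrow> bool" where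
  "complete_lattice_semiring S \<longleftrightarrow> is_semiring S \<and>
     (\<forall>s t. nat_le S s t \<and> nat_le S t s \<longrightarrow> s = t) \<and>
     (\<forall>T. \<exists>x. is_lub S T x)"

definition stop :: "'s semiring \<Rightarrow> 's" where
  "stop S = Lub S UNIV"

text \<open>Fin x xs is the finite sequence x # xs; Inf f is the infinite sequence f 0, f 1, ...\<close>
datatype 'x seq = Fin 'x "'x list" | Inf "nat \<Rightarrow> 'x"

fun seq_len :: "'x seq \<Rightarrow> enat" where
  "seq_len (Fin x xs) = enat (Suc (length xs))"
| "seq_len (Inf f) = \<infinity>"

text \<open>0-based access\<close>
fun seq_nth :: "'x seq \<Rightarrow> nat \<Rightarrow> 'x" where
  "seq_nth (Fin x xs) i = (x # xs) ! i"
| "seq_nth (Inf f) i = f i"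

fun sum_list_S :: "'s semiring \<Rightarrow> 's list \<Rightarrow> 's" where
  "sum_list_S S [] = szero S"
| "sum_list_S S (x # xs) = splus S x (sum_list_S S xs)"

fun prod_list_S :: "'s semiring \<Rightarrow> 's list \<Rightarrow> 's" where
  "prod_list_S S [] = sone S"
| "prod_list_S S (x # xs) = stimes S x (prod_list_S S xs)"

fun seq_sum :: "'s semiring \<Rightarrow> 's seq \<Rightarrow> 's" where
  "seq_sum S (Fin x xs) = sum_list_S S (x # xs)"
| "seq_sum S (Inf f) = Lub S {sum_list_S S (map f [0..<n]) | n. 1 \<le> n}"

fun seq_prod :: "'s semiring \<Rightarrow> 's seq \<Rightarrow> 's" where
  "seq_prod S (Fin x xs) = prod_list_S S (x # xs)"
| "seq_prod S (Inf f) = Lub S {prod_list_S S (map f [0..<n]) | n. 1 \<le> n}"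

text \<open>AVar i is the variable v_i (indices start at 1).\<close>
datatype 's aggr = AConst 's | AVar nat | APlus "'s aggr seq" | ATimes "'s aggr seq"

primrec aggr_vars :: "'s aggr \<Rightarrow> nat set" where
  "aggr_vars (AConst s) = {}"
| "aggr_vars (AVar i) = {i}"
| "aggr_vars (APlus F) = \<Union> (set_seq (map_seq aggr_vars F))"
| "aggr_vars (ATimes F) = \<Union> (set_seq (map_seq aggr_vars F))"

primrec aggr_eval :: "'s semiring \<Rightarrow> 's seq \<Rightarrow> 's aggr \<Rightarrow> 's" where
  "aggr_eval S args (AConst s) = s"
| "aggr_eval S args (AVar i) = seq_nth args (i - 1)"
| "aggr_eval S args (APlus F) = seq_sum S (map_seq (aggr_eval S args) F)"
| "aggr_eval S args (ATimes F) = seq_prod S (map_seq (aggr_eval S args) F)"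

definition NF :: "('a \<Rightarrow> 'a seq \<Rightarrow> bool) \<Rightarrow> 'a set" where
  "NF step = {a. \<not> (\<exists>B. step a B)}"

definition is_wARS ::
  "('a \<Rightarrow> 'a seq \<Rightarrow> bool) \<Rightarrow> 's semiring \<Rightarrow> ('a \<Rightarrow> 's) \<Rightarrow> ('a \<Rightarrow> 'a seq \<Rightarrow> 's aggr) \<Rightarrow> bool" where
  "is_wARS step S fNF Aggr \<longleftrightarrow> complete_lattice_semiring S \<and>
     (\<forall>a B. step a B \<longrightarrow> (\<forall>i\<in>aggr_vars (Aggr a B). 1 \<le> i \<and> enat i \<le> seq_len B))"

text \<open>The datatype only contains well-founded trees;
  finite depth is imposed separately.\<close>
datatype 'a tree = Leaf 'a | Node 'a "'a tree seq"

primrec root :: "'a tree \<Rightarrow> 'a" where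
  "root (Leaf a) = a"
| "root (Node a F) = a"

inductive is_RT :: "('a \<Rightarrow> 'a seq \<Rightarrow> bool) \<Rightarrow> 'a tree \<Rightarrow> bool" for step where
  "is_RT step (Leaf a)"
| "step a (map_seq root F) \<Longrightarrow> (\<forall>t\<in>set_seq F. is_RT step t) \<Longrightarrow> is_RT step (Node a F)"

inductive depth_le :: "nat \<Rightarrow> 'a tree \<Rightarrow> bool" where
  "depth_le n (Leaf a)"
| "(\<forall>t\<in>set_seq F. depth_le n t) \<Longrightarrow> depth_le (Suc n) (Node a F)"

definition finite_depth :: "'a tree \<Rightarrow> bool" where
  "finite_depth t \<longleftrightarrow> (\<exists>n. depth_le n t)"

primrec tree_weight ::
  "('a \<Rightarrow> 'a seq \<Rightarrow> bool) \<Rightarrow> 's semiring \<Rightarrow> ('a \<Rightarrow> 's) \<Rightarrow> ('a \<Rightarrow> 'a seq \<Rightarrow> 's aggr) \<Rightarrow> 'a tree \<Rightarrow> 's" where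
  "tree_weight step S fNF Aggr (Leaf a) = (if a \<in> NF step then fNF a else szero S)"
| "tree_weight step S fNF Aggr (Node a F) =
     (if a \<in> NF step then fNF a
      else aggr_eval S (map_seq (tree_weight step S fNF Aggr) F) (Aggr a (map_seq root F)))"

definition weight ::
  "('a \<Rightarrow> 'a seq \<Rightarrow> bool) \<Rightarrow> 's semiring \<Rightarrow> ('a \<Rightarrow> 's) \<Rightarrow> ('a \<Rightarrow> 'a seq \<Rightarrow> 's aggr) \<Rightarrow> 'a \<Rightarrow> 's" where
  "weight step S fNF Aggr a = Lub S {tree_weight step S fNF Aggr t | t.
      is_RT step t \<and> finite_depth t \<and> root t = a}"

definition bounded ::
  "('a \<Rightarrow> 'a seq \<Rightarrow> bool) \<Rightarrow> 's semiring \<Rightarrow> ('a \<Rightarrow> 's) \<Rightarrow> ('a \<Rightarrow> 'a seq \<Rightarrow> 's aggr) \<Rightarrow> bool" where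
  "bounded step S fNF Aggr \<longleftrightarrow> (\<forall>a. weight step S fNF Aggr a \<noteq> stop S)"

definition universally_bounded ::
  "('a \<Rightarrow> 'a seq \<Rightarrow> bool) \<Rightarrow> 's semiring \<Rightarrow> ('a \<Rightarrow> 's) \<Rightarrow> bool" where
  "universally_bounded step S fNF \<longleftrightarrow>
     (\<exists>C. C \<noteq> stop S \<and> (\<forall>a\<in>NF step. nat_le S (fNF a) C))"

definition selective :: "'s semiring \<Rightarrow> 'b seq \<Rightarrow> 's aggr \<Rightarrow> bool" where
  "selective S B g \<longleftrightarrow>
     (\<forall>args. seq_len args = seq_len B \<longrightarrow>
        (\<exists>i. 1 \<le> i \<and> enat i \<le> seq_len B \<and> aggr_eval S args g = seq_nth args (i - 1)))"

end

theory Submission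
  imports Defs
begin

text \<open>(i) The one-node reduction tree at a normal form a already has weight fNF a = \<top>.
  (ii) A selective aggregator hands up the weight of one of its children, so by induction every
  reduction tree weighs either fNF b for some normal form b or \<zero> (from an unexpanded leaf);
  both lie below the universal bound C \<noteq> \<top>, hence so does their supremum.\<close>

lemma nat_le_antisym:
  assumes "complete_lattice_semiring S" "nat_le S s t" "nat_le S t s"
  shows "s = t"
  using assms unfolding complete_lattice_semiring_def by blast

lemma szero_nat_le:
  assumes "complete_lattice_semiring S"
  shows "nat_le S (szero S) x"
proof -
  have "splus S (szero S) x = x"
    using assms unfolding complete_lattice_semiring_def is_semiring_def by blast
  then show ?thesis unfolding nat_le_def by blast
qed

lemma is_lub_Lub:
  assumes "complete_lattice_semiring S"
  shows "is_lub S T (Lub S T)"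
proof -
  obtain x where x: "is_lub S T x"
    using assms unfolding complete_lattice_semiring_def by blast
  have "y = x" if "is_lub S T y" for y
    using nat_le_antisym[OF assms] x that unfolding is_lub_def by blast
  with x have "\<exists>!x. is_lub S T x" by blast
  then show ?thesis unfolding Lub_def by (rule theI')
qed

lemma Lub_upper:
  assumes "complete_lattice_semiring S" "t \<in> T"
  shows "nat_le S t (Lub S T)"
  using is_lub_Lub[OF assms(1)] assms(2) unfolding is_lub_def by blast

lemma Lub_least:
  assumes "complete_lattice_semiring S" "\<And>t. t \<in> T \<Longrightarrow> nat_le S t y"
  shows "nat_le S (Lub S T) y"
  using is_lub_Lub[OF assms(1)] assms(2) unfolding is_lub_def by blast

lemma nat_le_stop:
  assumes "complete_lattice_semiring S"
  shows "nat_le S x (stop S)"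
  unfolding stop_def using Lub_upper[OF assms] by blast

lemma stop_nat_le_imp_eq:
  assumes "complete_lattice_semiring S" "nat_le S (stop S) x"
  shows "x = stop S"
  using nat_le_antisym[OF assms(1) nat_le_stop[OF assms(1)] assms(2)] .

lemma seq_nth_in_set_seq:
  assumes "1 \<le> i" "enat i \<le> seq_len s"
  shows "seq_nth s (i - 1) \<in> set_seq s"
  using assms by (cases s) (auto simp: nth_Cons split: nat.splits)

lemma seq_len_map_seq [simp]: "seq_len (map_seq f s) = seq_len s"
  by (cases s) auto

lemma selective_imp_in_set_seq:
  assumes "selective S B g" "seq_len args = seq_len B"
  shows "aggr_eval S args g \<in> set_seq args"
proof -
  obtain i where "1 \<le> i" "enat i \<le> seq_len B" "aggr_eval S args g = seq_nth args (i - 1)"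
    using assms unfolding selective_def by blast
  with assms(2) show ?thesis by (metis seq_nth_in_set_seq)
qed

lemma tree_weight_range_if_selective:
  assumes sel: "\<forall>a B. step a B \<longrightarrow> selective S B (Aggr a B)"
    and "is_RT step t"
  shows "tree_weight step S fNF Aggr t \<in> fNF ` NF step \<union> {szero S}"
  using assms(2)
proof (induction t rule: is_RT.induct)
  case (1 a)
  then show ?case by simp
next
  case (2 a F)
  let ?w = "tree_weight step S fNF Aggr"
  show ?case
  proof (cases "a \<in> NF step")
    case True
    then show ?thesis by simp
  next
    case False
    from sel 2 have "aggr_eval S (map_seq ?w F) (Aggr a (map_seq root F)) \<in> set_seq (map_seq ?w F)"
      by (intro selective_imp_in_set_seq[of S "map_seq root F"]) simp_all
    then obtain t where t: "t \<in> set_seq F"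
      and "aggr_eval S (map_seq ?w F) (Aggr a (map_seq root F)) = ?w t"
      by (auto simp: seq.set_map)
    moreover have "?w t \<in> fNF ` NF step \<union> {szero S}"
      using 2(2) t by blast
    ultimately show ?thesis
      using False by simp
  qed
qed

lemma fNF_nat_le_weight:
  assumes "complete_lattice_semiring S" "a \<in> NF step"
  shows "nat_le S (fNF a) (weight step S fNF Aggr a)"
proof -
  have "finite_depth (Leaf a)"
    unfolding finite_depth_def by (rule exI[of _ 0]) (rule depth_le.intros(1))
  moreover have "is_RT step (Leaf a)"
    by (rule is_RT.intros(1))
  ultimately have "tree_weight step S fNF Aggr (Leaf a)
      \<in> {tree_weight step S fNF Aggr t | t. is_RT step t \<and> finite_depth t \<and> root t = a}"
    by (intro CollectI exI[of _ "Leaf a"]) simp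
  then have "nat_le S (tree_weight step S fNF Aggr (Leaf a)) (weight step S fNF Aggr a)"
    unfolding weight_def by (rule Lub_upper[OF assms(1)])
  with assms(2) show ?thesis by simp
qed

lemma weight_nat_le_if_tree_weights_nat_le:
  assumes "complete_lattice_semiring S"
    and "\<And>t. is_RT step t \<Longrightarrow> nat_le S (tree_weight step S fNF Aggr t) C"
  shows "nat_le S (weight step S fNF Aggr a) C"
  unfolding weight_def using assms(2) by (blast intro: Lub_least[OF assms(1)])

lemma not_bounded_if_fNF_stop:
  assumes "complete_lattice_semiring S" "a \<in> NF step" "fNF a = stop S"
  shows "\<not> bounded step S fNF Aggr"
  using fNF_nat_le_weight[OF assms(1,2)] stop_nat_le_imp_eq[OF assms(1)] assms(3)
  unfolding bounded_def by metis

lemma bounded_if_selective: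
  assumes S: "complete_lattice_semiring S"
    and "universally_bounded step S fNF"
    and sel: "\<forall>a B. step a B \<longrightarrow> selective S B (Aggr a B)"
  shows "bounded step S fNF Aggr"
proof -
  obtain C where C: "C \<noteq> stop S" "\<forall>b\<in>NF step. nat_le S (fNF b) C"
    using assms(2) unfolding universally_bounded_def by blast
  have "nat_le S (tree_weight step S fNF Aggr t) C" if "is_RT step t" for t
    using tree_weight_range_if_selective[where fNF = fNF, OF sel that] C(2) szero_nat_le[OF S, of C] by auto
  then have "nat_le S (weight step S fNF Aggr a) C" for a
    by (rule weight_nat_le_if_tree_weights_nat_le[OF S])
  then show ?thesis
    unfolding bounded_def using stop_nat_le_imp_eq[OF S] C(1) by metis
qed

theorem theorem25:
  fixes step :: "'a \<Rightarrow> 'a seq \<Rightarrow> bool"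
    and S :: "'s semiring"
    and fNF :: "'a \<Rightarrow> 's"
    and Aggr :: "'a \<Rightarrow> 'a seq \<Rightarrow> 's aggr"
  assumes "is_wARS step S fNF Aggr"
  shows "((\<exists>a\<in>NF step. fNF a = stop S) \<longrightarrow> \<not> bounded step S fNF Aggr)
       \<and> ((universally_bounded step S fNF \<and> (\<forall>a B. step a B \<longrightarrow> selective S B (Aggr a B)))
            \<longrightarrow> bounded step S fNF Aggr)"
proof -
  have "complete_lattice_semiring S"
    using assms unfolding is_wARS_def by blast
  then show ?thesis
    using not_bounded_if_fNF_stop[of S _ step fNF Aggr] bounded_if_selective[of S step fNF Aggr]
    by blast
qed

end
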